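(* Let $G=(\mathcal{S},\mathcal{E})$ be a connected undirected graph with node set $\mathcal{S}=\{1,\dots,N\}$, let $I_G\in\mathbb{R}^{|\mathcal{E}|\times N}$ be an oriented incidence matrix of $G$, and let $A:=I_G\otimes I_{n_\theta}=(A_1,\dots,A_N)$ with column blocks $A_i\in\mathbb{R}^{|\mathcal{E}|n_\theta\times n_\theta}$. For $i\in\mathcal{S}$ let $M_i\in\mathbb{R}^{n_y\times n_\theta}$ have full column rank and $y_i\in\mathbb{R}^{n_y}$. Define $$S:=\sum_{i\in\mathcal{S}}A_i(M_i^\top M_i)^{-1}A_i^\top,\qquad s:=-\sum_{i\in\mathcal{S}}A_i(M_i^\top M_i)^{-1}M_i^\top y_i.$$ Then $s\in\operatorname{range}(S)$.
   Context: An oriented incidence matrix of $G$ has one row per edge $(i,j)\in\mathcal{E}$, with entry $+1$ in column $i$, $-1$ in column $j$, and $0$ elsewhere. $\otimes$ denotes the Kronecker product and $I_{n_\theta}$ the $n_\theta\times n_\theta$ identity. *)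

theory Defs
  imports "HOL-Analysis.Analysis"
begin

text \<open>A simple undirected graph on node type 'n whose edges are indexed by the
  finite type 'e; each edge e has an (arbitrarily chosen) orientation
  from src e to tgt e.\<close>

definition simple_oriented_graph :: "('e \<Rightarrow> 'n) \<Rightarrow> ('e \<Rightarrow> 'n) \<Rightarrow> bool" where
  "simple_oriented_graph src tgt \<longleftrightarrow>
     (\<forall>e. src e \<noteq> tgt e) \<and>
     inj (\<lambda>e. {src e, tgt e})"

definition graph_adj :: "('e \<Rightarrow> 'n) \<Rightarrow> ('e \<Rightarrow> 'n) \<Rightarrow> 'n \<Rightarrow> 'n \<Rightarrow> bool" where
  "graph_adj src tgt u v \<longleftrightarrow> (\<exists>e. {src e, tgt e} = {u, v})"

definition graph_connected :: "('e \<Rightarrow> 'n) \<Rightarrow> ('e \<Rightarrow> 'n) \<Rightarrow> bool" where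
  "graph_connected src tgt \<longleftrightarrow> (\<forall>u v. (graph_adj src tgt)\<^sup>*\<^sup>* u v)"

definition incidence_matrix :: "('e \<Rightarrow> 'n) \<Rightarrow> ('e \<Rightarrow> 'n) \<Rightarrow> real^'n^'e" where
  "incidence_matrix src tgt = (\<chi> e k. if k = src e then 1 else if k = tgt e then -1 else 0)"

definition kron :: "real^'b^'a \<Rightarrow> real^'d^'c \<Rightarrow> real^('b \<times> 'd)^('a \<times> 'c)" where
  "kron P Q = (\<chi> r k. P $ fst r $ fst k * Q $ snd r $ snd k)"

definition col_block :: "real^('n::finite \<times> 't::finite)^'r \<Rightarrow> 'n \<Rightarrow> real^'t^'r" where
  "col_block A i = (\<chi> r b. A $ r $ (i, b))"

end

theory Submission
  imports Defs
begin

text \<open>Nothing about the graph is needed: the statement holds for an arbitrary matrix \<open>A\<close>.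
  Each \<open>P\<^sub>i = (M\<^sub>i\<^sup>T M\<^sub>i)\<^sup>-\<^sup>1\<close> is positive definite, so
  \<open>x\<^sup>T S x = \<Sum>\<^sub>i (A\<^sub>i\<^sup>T x)\<^sup>T P\<^sub>i (A\<^sub>i\<^sup>T x)\<close> vanishes only if every \<open>A\<^sub>i\<^sup>T x\<close> does.
  Hence the kernel of \<open>S\<^sup>T\<close> is orthogonal to the range of every \<open>A\<^sub>i\<close>, and since
  \<open>range S\<close> is the orthogonal complement of \<open>ker S\<^sup>T\<close>, the vector \<open>s\<close>, a sum of
  elements of these ranges, lies in \<open>range S\<close>.\<close>

declare transpose_matrix_vector [simp del]

lemma matrix_vector_mult_sum_rdistrib:
  "(\<Sum>i\<in>I. B i :: real^'n^'m) *v x = (\<Sum>i\<in>I. B i *v x)"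
  by (induction I rule: infinite_finite_induct) (auto simp: matrix_vector_mult_add_rdistrib)

lemma inner_matrix_vector_mult_transpose:
  "((A :: real^'n^'m) *v u) \<bullet> v = u \<bullet> (transpose A *v v)"
  by (metis dot_lmul_matrix inner_commute vector_transpose_matrix)

lemma range_matrix_vector_mult_eq_orthogonal_comp:
  fixes S :: "real^'n^'m"
  shows "range ((*v) S) = ((*v) (transpose S) -` {0})\<^sup>\<bottom>"
proof -
  have "(*v) (transpose S) -` {0} = (range ((*v) S))\<^sup>\<bottom>"
    using ker_orthogonal_comp_adjoint[OF matrix_vector_mul_linear, of "transpose S"]
    by (simp add: adjoint_matrix)
  moreover have "subspace (range ((*v) S))"
    by (rule subspace_UNIV [THEN linear_subspace_image [OF matrix_vector_mul_linear]])
  ultimately show ?thesis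
    by (simp add: orthogonal_comp_self)
qed

definition pos_def_matrix :: "real^'n^'n \<Rightarrow> bool" where
  "pos_def_matrix P \<longleftrightarrow> (\<forall>u. u \<noteq> 0 \<longrightarrow> 0 < u \<bullet> (P *v u))"

lemma pos_def_matrix_quadratic_nonneg: "pos_def_matrix P \<Longrightarrow> 0 \<le> u \<bullet> (P *v u)"
  unfolding pos_def_matrix_def by (cases "u = 0") (auto intro: less_imp_le)

lemma pos_def_matrix_quadratic_eq_0: "pos_def_matrix P \<Longrightarrow> u \<bullet> (P *v u) = 0 \<Longrightarrow> u = 0"
  unfolding pos_def_matrix_def by (metis less_irrefl)

lemma matrix_mul_matrix_inv_right:
  fixes G :: "real^'n^'n"
  assumes "invertible G"
  shows "G ** matrix_inv G = mat 1"
proof -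
  have "\<exists>G'. G ** G' = mat 1 \<and> G' ** G = mat 1"
    using assms unfolding invertible_def .
  then show ?thesis
    unfolding matrix_inv_def by (rule someI2_ex) blast
qed

lemma inner_gram_matrix: "((transpose M ** M) *v w) \<bullet> w = (M *v w) \<bullet> (M *v w)"
  for M :: "real^'n^'m"
  by (simp add: matrix_vector_mul_assoc [symmetric] inner_matrix_vector_mult_transpose inner_commute)

lemma invertible_gram_matrix:
  fixes M :: "real^'n^'m"
  assumes "rank M = CARD('n)"
  shows "invertible (transpose M ** M)"
proof -
  have "w = 0" if "(transpose M ** M) *v w = 0" for w
  proof -
    have "(M *v w) \<bullet> (M *v w) = 0"
      using that by (simp flip: inner_gram_matrix)
    moreover have "inj ((*v) M)"
      using assms full_rank_injective by blast
    ultimately show ?thesis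
      by (metis inner_eq_zero_iff injD matrix_vector_mult_0_right)
  qed
  then show ?thesis
    by (simp add: invertible_left_inverse matrix_left_invertible_ker)
qed

lemma pos_def_matrix_inv_gram:
  fixes M :: "real^'n^'m"
  assumes "rank M = CARD('n)"
  shows "pos_def_matrix (matrix_inv (transpose M ** M))"
  unfolding pos_def_matrix_def
proof (intro allI impI)
  fix u :: "real^'n"
  assume "u \<noteq> 0"
  define G where "G = transpose M ** M"
  define w where "w = matrix_inv G *v u"
  have u: "u = G *v w"
    using matrix_mul_matrix_inv_right [OF invertible_gram_matrix [OF assms]]
    by (simp add: w_def G_def matrix_vector_mul_assoc)
  with \<open>u \<noteq> 0\<close> have "M *v w \<noteq> 0"
    by (auto simp: G_def matrix_vector_mul_assoc [symmetric])
  then have "0 < (G *v w) \<bullet> w"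
    by (simp add: G_def inner_gram_matrix)
  then show "0 < u \<bullet> (matrix_inv G *v u)"
    by (simp add: w_def [symmetric] u [symmetric] flip: G_def)
qed

lemma inner_congruence:
  "x \<bullet> ((C ** P ** transpose C) *v x) = (transpose C *v x) \<bullet> (P *v (transpose C *v x))"
  for C :: "real^'n^'m"
proof -
  have "x \<bullet> ((C ** P ** transpose C) *v x) = (C *v (P *v (transpose C *v x))) \<bullet> x"
    by (simp add: matrix_vector_mul_assoc matrix_mul_assoc inner_commute)
  also have "\<dots> = (P *v (transpose C *v x)) \<bullet> (transpose C *v x)"
    by (rule inner_matrix_vector_mult_transpose)
  finally show ?thesis
    by (simp add: inner_commute)
qed

lemma sum_congruence_quadratic_eq_0D:
  fixes C :: "'i \<Rightarrow> real^'n^'m"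
  assumes "finite I" and "\<And>i. i \<in> I \<Longrightarrow> pos_def_matrix (P i)"
    and "x \<bullet> ((\<Sum>i\<in>I. C i ** P i ** transpose (C i)) *v x) = 0" and "i \<in> I"
  shows "transpose (C i) *v x = 0"
proof -
  define q where "q i = transpose (C i) *v x" for i
  have "(\<Sum>i\<in>I. q i \<bullet> (P i *v q i)) = 0"
    using assms(3)
    by (simp add: q_def matrix_vector_mult_sum_rdistrib inner_sum_right inner_congruence)
  with assms(1,2,4) have "q i \<bullet> (P i *v q i) = 0"
    by (simp add: sum_nonneg_eq_0_iff pos_def_matrix_quadratic_nonneg)
  then show ?thesis
    unfolding q_def using assms(2,4) pos_def_matrix_quadratic_eq_0 by blast
qed

lemma sum_in_range_sum_congruence:
  fixes C :: "'i \<Rightarrow> real^'n^'m"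
  assumes "finite I" and "\<And>i. i \<in> I \<Longrightarrow> pos_def_matrix (P i)"
  shows "(\<Sum>i\<in>I. C i *v z i) \<in> range ((*v) (\<Sum>i\<in>I. C i ** P i ** transpose (C i)))"
    (is "_ \<in> range ((*v) ?S)")
  unfolding range_matrix_vector_mult_eq_orthogonal_comp orthogonal_comp_def
proof (intro CollectI ballI)
  fix x assume "x \<in> (*v) (transpose ?S) -` {0}"
  then have "(?S *v x) \<bullet> x = 0"
    by (simp add: inner_matrix_vector_mult_transpose)
  then have "x \<bullet> (?S *v x) = 0"
    by (simp add: inner_commute)
  then have "transpose (C i) *v x = 0" if "i \<in> I" for i
    using sum_congruence_quadratic_eq_0D [of I P, OF assms] that by blast
  then have "(C i *v z i) \<bullet> x = 0" if "i \<in> I" for i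
    using that by (simp add: inner_matrix_vector_mult_transpose)
  then show "orthogonal x (\<Sum>i\<in>I. C i *v z i)"
    by (simp add: orthogonal_def inner_sum_left inner_commute [of x])
qed

theorem lemma2:
  fixes src tgt :: "'e::finite \<Rightarrow> 'n::finite"
    and M :: "'n \<Rightarrow> real^'t::finite^'y::finite"
    and y :: "'n \<Rightarrow> real^'y"
  assumes "simple_oriented_graph src tgt"
    and "graph_connected src tgt"
    and "\<And>i. rank (M i) = CARD('t)"
  defines "A \<equiv> kron (incidence_matrix src tgt) (mat 1 :: real^'t^'t)"
  defines "S \<equiv> (\<Sum>i\<in>UNIV. col_block A i ** matrix_inv (transpose (M i) ** M i)
                    ** transpose (col_block A i))"
    and "s \<equiv> - (\<Sum>i\<in>UNIV. (col_block A i ** matrix_inv (transpose (M i) ** M i)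
                    ** transpose (M i)) *v y i)"
  shows "s \<in> range (\<lambda>x. S *v x)"
proof -
  have "s = (\<Sum>i\<in>UNIV. col_block A i *v
              - ((matrix_inv (transpose (M i) ** M i) ** transpose (M i)) *v y i))"
    by (simp add: s_def matrix_vector_mul_assoc matrix_mul_assoc sum_negf vec.neg)
  also have "\<dots> \<in> range ((*v) S)"
    unfolding S_def
    by (rule sum_in_range_sum_congruence) (simp_all add: pos_def_matrix_inv_gram assms(3))
  finally show ?thesis .
qed

end
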